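(* Let $\phi$ be a quantum channel on $\mathcal M(d;\mathbb C)$ with more than $d$ eigenvalues of modulus $1$ counted with multiplicity, i.e. $|\sigma_P(\phi)|>d$. Then $\phi$ is asymptotically entanglement-saving.
   Context: A quantum channel is a completely positive, trace-preserving linear map on $\mathcal M(d;\mathbb C)$, regarded as a linear operator on the $d^2$-dimensional space $\mathcal M(d;\mathbb C)$ for spectral purposes. $|\sigma_P(\phi)|$ is the number of its eigenvalues of modulus $1$ counted with multiplicity. A channel is entanglement-breaking if $(\psi\otimes I)(\rho)$ is separable for every bipartite state $\rho$. $\phi$ is asymptotically entanglement-saving (AES) if no limit point of the sequence $(\phi^n)_{n\in\mathbb N}$ of its powers is entanglement-breaking. *)

theory Defs
  imports Complex_Main "Jordan_Normal_Form.Char_Poly"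
begin

definition psd_mat :: "nat \<Rightarrow> complex mat \<Rightarrow> bool" where
  "psd_mat n A \<longleftrightarrow> A \<in> carrier_mat n n \<and>
     (\<forall>v \<in> carrier_vec n. Im (conjugate v \<bullet> (A *\<^sub>v v)) = 0 \<and> Re (conjugate v \<bullet> (A *\<^sub>v v)) \<ge> 0)"

definition mtrace :: "complex mat \<Rightarrow> complex" where
  "mtrace A = (\<Sum>i<dim_row A. A $$ (i,i))"

definition state_mat :: "nat \<Rightarrow> complex mat \<Rightarrow> bool" where
  "state_mat n A \<longleftrightarrow> psd_mat n A \<and> mtrace A = 1"

(* Kronecker product of an n x n and an m x m matrix; index (i,a) |-> i*m + a *)
definition kron :: "nat \<Rightarrow> nat \<Rightarrow> complex mat \<Rightarrow> complex mat \<Rightarrow> complex mat" where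
  "kron n m A B = mat (n*m) (n*m) (\<lambda>(p,q). A $$ (p div m, q div m) * B $$ (p mod m, q mod m))"

(* (psi \<otimes> id_k) applied to a matrix rho on C^d \<otimes> C^k (dimension d*k) *)
definition tensor_id :: "nat \<Rightarrow> nat \<Rightarrow> (complex mat \<Rightarrow> complex mat) \<Rightarrow> complex mat \<Rightarrow> complex mat" where
  "tensor_id d k \<psi> \<rho> = mat (d*k) (d*k) (\<lambda>(p,q).
      \<psi> (mat d d (\<lambda>(i,j). \<rho> $$ (i*k + p mod k, j*k + q mod k))) $$ (p div k, q div k))"

definition linear_map_mat :: "nat \<Rightarrow> (complex mat \<Rightarrow> complex mat) \<Rightarrow> bool" where
  "linear_map_mat d \<phi> \<longleftrightarrow>
     (\<forall>X \<in> carrier_mat d d. \<phi> X \<in> carrier_mat d d) \<and>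
     (\<forall>X \<in> carrier_mat d d. \<forall>Y \<in> carrier_mat d d. \<phi> (X + Y) = \<phi> X + \<phi> Y) \<and>
     (\<forall>X \<in> carrier_mat d d. \<forall>c. \<phi> (c \<cdot>\<^sub>m X) = c \<cdot>\<^sub>m \<phi> X)"

definition completely_positive :: "nat \<Rightarrow> (complex mat \<Rightarrow> complex mat) \<Rightarrow> bool" where
  "completely_positive d \<phi> \<longleftrightarrow>
     (\<forall>k. \<forall>\<rho>. psd_mat (d*k) \<rho> \<longrightarrow> psd_mat (d*k) (tensor_id d k \<phi> \<rho>))"

definition trace_preserving :: "nat \<Rightarrow> (complex mat \<Rightarrow> complex mat) \<Rightarrow> bool" where
  "trace_preserving d \<phi> \<longleftrightarrow> (\<forall>X \<in> carrier_mat d d. mtrace (\<phi> X) = mtrace X)"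

definition quantum_channel :: "nat \<Rightarrow> (complex mat \<Rightarrow> complex mat) \<Rightarrow> bool" where
  "quantum_channel d \<phi> \<longleftrightarrow> linear_map_mat d \<phi> \<and> completely_positive d \<phi> \<and> trace_preserving d \<phi>"

definition separable_state :: "nat \<Rightarrow> nat \<Rightarrow> complex mat \<Rightarrow> bool" where
  "separable_state d k \<rho> \<longleftrightarrow> (\<exists>(N::nat) (p::nat \<Rightarrow> real) (A::nat \<Rightarrow> complex mat) (B::nat \<Rightarrow> complex mat).
     (\<forall>i<N. p i \<ge> (0::real) \<and> state_mat d (A i) \<and> state_mat k (B i)) \<and>
     (\<Sum>i<N. p i) = 1 \<and>
     \<rho> = mat (d*k) (d*k) (\<lambda>(r,s). \<Sum>i<N. complex_of_real (p i) * kron d k (A i) (B i) $$ (r,s)))"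

definition entanglement_breaking :: "nat \<Rightarrow> (complex mat \<Rightarrow> complex mat) \<Rightarrow> bool" where
  "entanglement_breaking d \<psi> \<longleftrightarrow>
     (\<forall>k. \<forall>\<rho>. state_mat (d*k) \<rho> \<longrightarrow> separable_state d k (tensor_id d k \<psi> \<rho>))"

definition unit_mat :: "nat \<Rightarrow> nat \<Rightarrow> nat \<Rightarrow> complex mat" where
  "unit_mat d a b = mat d d (\<lambda>(i,j). if i = a \<and> j = b then 1 else 0)"

(* matrix of \<phi> as an operator on the d^2-dimensional space M(d;C), w.r.t. the basis of matrix units *)
definition transfer_mat :: "nat \<Rightarrow> (complex mat \<Rightarrow> complex mat) \<Rightarrow> complex mat" where
  "transfer_mat d \<phi> = mat (d*d) (d*d) (\<lambda>(r,s). \<phi> (unit_mat d (s div d) (s mod d)) $$ (r div d, r mod d))"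

definition peripheral_count :: "nat \<Rightarrow> (complex mat \<Rightarrow> complex mat) \<Rightarrow> nat" where
  "peripheral_count d \<phi> =
     (\<Sum>z \<in> {z. poly (char_poly (transfer_mat d \<phi>)) z = 0 \<and> cmod z = 1}.
        order z (char_poly (transfer_mat d \<phi>)))"

(* \<psi> is a limit point of the sequence F (convergence entrywise on M(d;C), i.e. in the
   finite-dimensional space of linear maps) *)
definition limit_point_maps :: "nat \<Rightarrow> (nat \<Rightarrow> complex mat \<Rightarrow> complex mat) \<Rightarrow> (complex mat \<Rightarrow> complex mat) \<Rightarrow> bool" where
  "limit_point_maps d F \<psi> \<longleftrightarrow> (\<exists>r. strict_mono r \<and>
     (\<forall>X \<in> carrier_mat d d. \<forall>i<d. \<forall>j<d. (\<lambda>n. F (r n) X $$ (i,j)) \<longlonglongrightarrow> \<psi> X $$ (i,j)))"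

definition asymptotically_entanglement_saving :: "nat \<Rightarrow> (complex mat \<Rightarrow> complex mat) \<Rightarrow> bool" where
  "asymptotically_entanglement_saving d \<phi> \<longleftrightarrow>
     (\<forall>\<psi>. limit_point_maps d (\<lambda>n. \<phi> ^^ n) \<psi> \<longrightarrow> \<not> entanglement_breaking d \<psi>)"

end

theory Submission
  imports Defs "Jordan_Normal_Form.Schur_Decomposition"
begin

text \<open>Let \<open>e\<^sub>j\<close> (\<open>j < d\<^sup>2\<close>) be the eigenvalues of the transfer matrix \<open>T\<^sub>\<phi>\<close> and let
  \<open>\<psi> = lim\<^sub>n \<phi> ^^ r n\<close>. Triangularizing \<open>T\<^sub>\<phi>\<close> shows that each \<open>e\<^sub>j ^ r n\<close> converges to some
  \<open>w\<^sub>j\<close>, with \<open>w\<^sub>j = 0\<close> if \<open>|e\<^sub>j| < 1\<close> and \<open>|w\<^sub>j| = 1\<close> if \<open>|e\<^sub>j| = 1\<close>, and that the transfer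
  matrix of \<open>\<psi> \<circ> \<phi> ^^ m\<close> has trace \<open>\<Sum>\<^sub>j e\<^sub>j ^ m * w\<^sub>j\<close>.
  If \<open>\<psi>\<close> were entanglement breaking, so would be every \<open>\<psi> \<circ> \<phi> ^^ m\<close>. A separable state has
  overlap at most \<open>1/d\<close> with the maximally entangled state, and this bounds the real part of
  that trace by \<open>d\<close>. But the unimodular \<open>e\<^sub>j\<close> return simultaneously: for a suitable \<open>m\<close>
  all \<open>e\<^sub>j ^ m * w\<^sub>j\<close> with \<open>|e\<^sub>j| = 1\<close> are close to \<open>1\<close>, so the real part is close to the number
  of peripheral eigenvalues, which exceeds \<open>d\<close>.\<close>

lemma sum_mult_div_mod:
  fixes f :: "nat \<Rightarrow> nat \<Rightarrow> 'a::comm_monoid_add"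
  shows "(\<Sum>p<d*k. f (p div k) (p mod k)) = (\<Sum>i<d. \<Sum>a<k. f i a)"
proof (induction d)
  case (Suc d)
  have split: "{..<Suc d * k} = {..<d*k} \<union> (\<lambda>a. d*k + a) ` {..<k}"
  proof (intro equalityI subsetI)
    fix p assume "p \<in> {..<Suc d * k}"
    then show "p \<in> {..<d*k} \<union> (\<lambda>a. d*k + a) ` {..<k}"
      by (cases "p < d*k") (auto intro!: image_eqI[where x = "p - d*k"])
  qed auto
  have "(\<Sum>p<Suc d * k. f (p div k) (p mod k)) =
      (\<Sum>p<d*k. f (p div k) (p mod k)) + (\<Sum>a<k. f ((d*k + a) div k) ((d*k + a) mod k))"
    unfolding split by (subst sum.union_disjoint) (auto simp: sum.reindex inj_on_def)
  also have "(\<Sum>a<k. f ((d*k + a) div k) ((d*k + a) mod k)) = (\<Sum>a<k. f d a)"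
    by (rule sum.cong) auto
  finally show ?case using Suc by simp
qed simp

lemma mult_add_less_mult: "i < d \<Longrightarrow> a < k \<Longrightarrow> i*k + a < d*(k::nat)"
  by (metis add_less_cancel_left less_le_trans mult_Suc mult_le_mono1 Suc_leI add.commute)

lemma div_less_of_less_mult: "p < d*k \<Longrightarrow> p div k < (d::nat)"
  by (metis less_mult_imp_div_less mult.commute)

lemma linear_map_mat_carrier:
  "linear_map_mat d \<phi> \<Longrightarrow> X \<in> carrier_mat d d \<Longrightarrow> \<phi> X \<in> carrier_mat d d"
  unfolding linear_map_mat_def by blast

lemma linear_map_mat_add:
  "linear_map_mat d \<phi> \<Longrightarrow> X \<in> carrier_mat d d \<Longrightarrow> Y \<in> carrier_mat d d \<Longrightarrow> \<phi> (X + Y) = \<phi> X + \<phi> Y"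
  unfolding linear_map_mat_def by blast

lemma linear_map_mat_smult:
  "linear_map_mat d \<phi> \<Longrightarrow> X \<in> carrier_mat d d \<Longrightarrow> \<phi> (c \<cdot>\<^sub>m X) = c \<cdot>\<^sub>m \<phi> X"
  unfolding linear_map_mat_def by blast

lemma linear_map_mat_id: "linear_map_mat d id"
  unfolding linear_map_mat_def by auto

lemma linear_map_mat_comp:
  "linear_map_mat d \<phi> \<Longrightarrow> linear_map_mat d \<chi> \<Longrightarrow> linear_map_mat d (\<phi> \<circ> \<chi>)"
  unfolding linear_map_mat_def by auto

lemma linear_map_mat_funpow: "linear_map_mat d \<phi> \<Longrightarrow> linear_map_mat d (\<phi> ^^ n)"
  by (induction n) (auto simp: linear_map_mat_id linear_map_mat_comp)

lemma unit_mat_carrier [simp]: "unit_mat d a b \<in> carrier_mat d d"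
  unfolding unit_mat_def by simp

lemma linear_map_mat_expand_on:
  assumes L: "linear_map_mat d \<phi>" and X: "X \<in> carrier_mat d d" and ij: "i < d" "j < d"
    and F: "finite F" "F \<subseteq> {..<d} \<times> {..<d}"
  shows "\<phi> (mat d d (\<lambda>(a,b). if (a,b) \<in> F then X $$ (a,b) else 0)) $$ (i,j)
     = (\<Sum>(a,b)\<in>F. X $$ (a,b) * \<phi> (unit_mat d a b) $$ (i,j))"
  using F
proof (induction F rule: finite_induct)
  case empty
  have zero: "mat d d (\<lambda>(a,b). if (a,b) \<in> {} then X $$ (a,b) else 0) = 0 \<cdot>\<^sub>m X"
    by (rule eq_matI) (use X in auto)
  show ?case
    unfolding zero
    using linear_map_mat_smult[OF L X, of 0] linear_map_mat_carrier[OF L X] ij by simp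
next
  case (insert p F)
  obtain a b where p: "p = (a,b)" by force
  let ?XF = "mat d d (\<lambda>(x,y). if (x,y) \<in> F then X $$ (x,y) else 0)"
  have IH: "\<phi> ?XF $$ (i,j) = (\<Sum>(a,b)\<in>F. X $$ (a,b) * \<phi> (unit_mat d a b) $$ (i,j))"
    by (rule insert.IH) (use insert.prems in simp)
  have "mat d d (\<lambda>(x,y). if (x,y) \<in> insert p F then X $$ (x,y) else 0)
     = X $$ (a,b) \<cdot>\<^sub>m unit_mat d a b + ?XF"
    by (rule eq_matI) (use insert p in \<open>auto simp: unit_mat_def\<close>)
  moreover have "\<phi> (X $$ (a,b) \<cdot>\<^sub>m unit_mat d a b + ?XF) $$ (i,j)
     = X $$ (a,b) * \<phi> (unit_mat d a b) $$ (i,j) + \<phi> ?XF $$ (i,j)"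
    using linear_map_mat_add[OF L, of "X $$ (a,b) \<cdot>\<^sub>m unit_mat d a b" ?XF]
      linear_map_mat_smult[OF L unit_mat_carrier] ij
      linear_map_mat_carrier[OF L unit_mat_carrier, of a b] linear_map_mat_carrier[OF L, of ?XF]
    by simp
  ultimately show ?case
    using IH insert.hyps p by simp
qed

lemma linear_map_mat_expand:
  assumes L: "linear_map_mat d \<phi>" and X: "X \<in> carrier_mat d d" and ij: "i < d" "j < d"
  shows "\<phi> X $$ (i,j) = (\<Sum>a<d. \<Sum>b<d. X $$ (a,b) * \<phi> (unit_mat d a b) $$ (i,j))"
proof -
  have "X = mat d d (\<lambda>(a,b). if (a,b) \<in> {..<d} \<times> {..<d} then X $$ (a,b) else 0)"
    by (rule eq_matI) (use X in auto)
  then show ?thesis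
    using linear_map_mat_expand_on[OF L X ij, of "{..<d} \<times> {..<d}"]
    by (simp add: sum.cartesian_product)
qed

lemma transfer_mat_carrier [simp]: "transfer_mat d \<phi> \<in> carrier_mat (d*d) (d*d)"
  unfolding transfer_mat_def by simp

lemma dim_transfer_mat [simp]:
  "dim_row (transfer_mat d \<phi>) = d*d" "dim_col (transfer_mat d \<phi>) = d*d"
  unfolding transfer_mat_def by simp_all

lemma mtrace_transfer_mat:
  "mtrace (transfer_mat d \<phi>) = (\<Sum>a<d. \<Sum>b<d. \<phi> (unit_mat d a b) $$ (a,b))"
proof -
  have "mtrace (transfer_mat d \<phi>) = (\<Sum>p<d*d. \<phi> (unit_mat d (p div d) (p mod d)) $$ (p div d, p mod d))"
    unfolding mtrace_def by (auto simp: transfer_mat_def intro!: sum.cong)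
  also have "\<dots> = (\<Sum>a<d. \<Sum>b<d. \<phi> (unit_mat d a b) $$ (a,b))"
    by (rule sum_mult_div_mod)
  finally show ?thesis .
qed

lemma transfer_mat_comp:
  assumes L1: "linear_map_mat d \<phi>" and L2: "linear_map_mat d \<chi>"
  shows "transfer_mat d (\<phi> \<circ> \<chi>) = transfer_mat d \<phi> * transfer_mat d \<chi>"
proof (rule eq_matI)
  fix r s assume "r < dim_row (transfer_mat d \<phi> * transfer_mat d \<chi>)"
    and "s < dim_col (transfer_mat d \<phi> * transfer_mat d \<chi>)"
  then have r: "r < d*d" and s: "s < d*d" by (auto simp: transfer_mat_def)
  let ?Y = "\<chi> (unit_mat d (s div d) (s mod d))"
  have rdm: "r div d < d" "r mod d < d"
    using r div_less_of_less_mult[OF r] by (auto intro: mod_less_divisor)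
  have "transfer_mat d (\<phi> \<circ> \<chi>) $$ (r,s) = \<phi> ?Y $$ (r div d, r mod d)"
    using r s by (simp add: transfer_mat_def)
  also have "\<dots> = (\<Sum>a<d. \<Sum>b<d. ?Y $$ (a,b) * \<phi> (unit_mat d a b) $$ (r div d, r mod d))"
    by (rule linear_map_mat_expand[OF L1 linear_map_mat_carrier[OF L2 unit_mat_carrier] rdm])
  also have "\<dots> = (\<Sum>t<d*d. ?Y $$ (t div d, t mod d) * \<phi> (unit_mat d (t div d) (t mod d)) $$ (r div d, r mod d))"
    by (rule sum_mult_div_mod[symmetric])
  also have "\<dots> = (transfer_mat d \<phi> * transfer_mat d \<chi>) $$ (r,s)"
    using r s by (auto simp: transfer_mat_def scalar_prod_def intro!: sum.cong
        simp del: div_mult_self1_is_m)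
  finally show "transfer_mat d (\<phi> \<circ> \<chi>) $$ (r,s) = (transfer_mat d \<phi> * transfer_mat d \<chi>) $$ (r,s)" .
qed (auto simp: transfer_mat_def)

lemma transfer_mat_id: "transfer_mat d id = 1\<^sub>m (d*d)"
proof (rule eq_matI)
  fix r s assume "r < dim_row (1\<^sub>m (d*d) :: complex mat)" "s < dim_col (1\<^sub>m (d*d) :: complex mat)"
  then have r: "r < d*d" and s: "s < d*d" by auto
  have "(r div d = s div d \<and> r mod d = s mod d) = (r = s)"
    by (metis div_mult_mod_eq)
  then show "transfer_mat d id $$ (r,s) = 1\<^sub>m (d*d) $$ (r,s)"
    using r s div_less_of_less_mult[OF r] mod_less_divisor[of d r]
    by (cases "d = 0") (auto simp: transfer_mat_def unit_mat_def)
qed (auto simp: transfer_mat_def)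

lemma transfer_mat_funpow:
  assumes "linear_map_mat d \<phi>"
  shows "transfer_mat d (\<phi> ^^ n) = transfer_mat d \<phi> ^\<^sub>m n"
proof (induction n)
  case 0
  show ?case using transfer_mat_id[of d] by (simp add: id_def)
next
  case (Suc n)
  have "transfer_mat d (\<phi> ^^ Suc n) = transfer_mat d (\<phi> ^^ n) * transfer_mat d \<phi>"
    unfolding funpow_Suc_right by (rule transfer_mat_comp[OF linear_map_mat_funpow[OF assms] assms])
  then show ?case using Suc by (simp only: pow_mat.simps)
qed

lemma tensor_id_comp:
  assumes g: "\<And>X. X \<in> carrier_mat d d \<Longrightarrow> g X \<in> carrier_mat d d"
  shows "tensor_id d k (f \<circ> g) \<rho> = tensor_id d k f (tensor_id d k g \<rho>)"
proof (rule eq_matI)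
  fix p q assume "p < dim_row (tensor_id d k f (tensor_id d k g \<rho>))"
    "q < dim_col (tensor_id d k f (tensor_id d k g \<rho>))"
  then have p: "p < d*k" and q: "q < d*k" by (auto simp: tensor_id_def)
  then have "0 < k" by (cases k) auto
  then have ab: "p mod k < k" "q mod k < k" by auto
  let ?B = "mat d d (\<lambda>(i,j). \<rho> $$ (i*k + p mod k, j*k + q mod k))"
  have gB: "g ?B \<in> carrier_mat d d" by (rule g) simp
  have "mat d d (\<lambda>(i,j). tensor_id d k g \<rho> $$ (i*k + p mod k, j*k + q mod k)) = g ?B"
    by (rule eq_matI)
       (use gB ab mult_add_less_mult[of _ d "p mod k" k] mult_add_less_mult[of _ d "q mod k" k]
        in \<open>auto simp: tensor_id_def\<close>)
  then show "tensor_id d k (f \<circ> g) \<rho> $$ (p,q) = tensor_id d k f (tensor_id d k g \<rho>) $$ (p,q)"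
    using p q by (simp add: tensor_id_def)
qed (auto simp: tensor_id_def)

lemma tensor_id_id:
  assumes "\<rho> \<in> carrier_mat (d*k) (d*k)"
  shows "tensor_id d k id \<rho> = \<rho>"
  by (rule eq_matI) (use assms div_less_of_less_mult in \<open>auto simp: tensor_id_def\<close>)

lemma mtrace_tensor_id:
  assumes g: "\<And>X. X \<in> carrier_mat d d \<Longrightarrow> g X \<in> carrier_mat d d"
    and T: "trace_preserving d g" and \<rho>: "\<rho> \<in> carrier_mat (d*k) (d*k)"
  shows "mtrace (tensor_id d k g \<rho>) = mtrace \<rho>"
proof -
  let ?B = "\<lambda>a. mat d d (\<lambda>(i,j). \<rho> $$ (i*k + a, j*k + a))"
  have gB: "dim_row (g (?B a)) = d" for a using g[of "?B a"] by simp
  have "mtrace (tensor_id d k g \<rho>) = (\<Sum>p<d*k. g (?B (p mod k)) $$ (p div k, p div k))"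
    unfolding mtrace_def by (auto simp: tensor_id_def intro!: sum.cong)
  also have "\<dots> = (\<Sum>i<d. \<Sum>a<k. g (?B a) $$ (i, i))"
    by (rule sum_mult_div_mod)
  also have "\<dots> = (\<Sum>a<k. mtrace (g (?B a)))"
    unfolding mtrace_def gB by (rule sum.swap)
  also have "\<dots> = (\<Sum>a<k. mtrace (?B a))"
    using T unfolding trace_preserving_def by simp
  also have "\<dots> = (\<Sum>i<d. \<Sum>a<k. \<rho> $$ (i*k + a, i*k + a))"
    unfolding mtrace_def by (simp add: sum.swap[of _ "{..<k}"])
  also have "\<dots> = (\<Sum>p<d*k. \<rho> $$ ((p div k)*k + p mod k, (p div k)*k + p mod k))"
    by (rule sum_mult_div_mod[symmetric])
  also have "\<dots> = mtrace \<rho>"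
    using \<rho> by (simp add: mtrace_def)
  finally show ?thesis .
qed

lemma quantum_channel_id: "quantum_channel d id"
  using tensor_id_id unfolding quantum_channel_def completely_positive_def trace_preserving_def psd_mat_def
  by (auto simp: linear_map_mat_id)

lemma quantum_channel_comp:
  assumes "quantum_channel d f" and "quantum_channel d g"
  shows "quantum_channel d (f \<circ> g)"
proof -
  have L: "linear_map_mat d f" "linear_map_mat d g" and C: "completely_positive d f" "completely_positive d g"
    and T: "trace_preserving d f" "trace_preserving d g"
    using assms unfolding quantum_channel_def by auto
  note g = linear_map_mat_carrier[OF L(2)]
  have "completely_positive d (f \<circ> g)"
    using C unfolding completely_positive_def by (simp add: tensor_id_comp[OF g])
  moreover have "trace_preserving d (f \<circ> g)"
    using T g unfolding trace_preserving_def by simp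
  ultimately show ?thesis
    using linear_map_mat_comp[OF L] unfolding quantum_channel_def by simp
qed

lemma quantum_channel_funpow: "quantum_channel d \<phi> \<Longrightarrow> quantum_channel d (\<phi> ^^ n)"
  by (induction n) (auto simp: quantum_channel_id quantum_channel_comp)

lemma entanglement_breaking_comp:
  assumes EB: "entanglement_breaking d \<psi>" and QC: "quantum_channel d g"
  shows "entanglement_breaking d (\<psi> \<circ> g)"
  unfolding entanglement_breaking_def
proof (intro allI impI)
  fix k \<rho> assume "state_mat (d*k) \<rho>"
  then have P: "psd_mat (d*k) \<rho>" and tr: "mtrace \<rho> = 1" unfolding state_mat_def by auto
  have g: "\<And>X. X \<in> carrier_mat d d \<Longrightarrow> g X \<in> carrier_mat d d" "trace_preserving d g"
    and "completely_positive d g"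
    using QC linear_map_mat_carrier unfolding quantum_channel_def by auto
  then have "psd_mat (d*k) (tensor_id d k g \<rho>)"
    using P unfolding completely_positive_def by blast
  moreover have "mtrace (tensor_id d k g \<rho>) = 1"
    using mtrace_tensor_id[OF g] P tr unfolding psd_mat_def by simp
  ultimately have "separable_state d k (tensor_id d k \<psi> (tensor_id d k g \<rho>))"
    using EB unfolding entanglement_breaking_def state_mat_def by blast
  then show "separable_state d k (tensor_id d k (\<psi> \<circ> g) \<rho>)"
    using tensor_id_comp[OF g(1)] by simp
qed

lemma psd_matD:
  assumes "psd_mat n A" and "v \<in> carrier_vec n"
  shows "Im (conjugate v \<bullet> (A *\<^sub>v v)) = 0" "Re (conjugate v \<bullet> (A *\<^sub>v v)) \<ge> 0"
  using assms unfolding psd_mat_def by auto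

lemma quadratic_form_unit_vec:
  assumes "A \<in> carrier_mat n n" and "a < n"
  shows "conjugate (unit_vec n a) \<bullet> (A *\<^sub>v unit_vec n a) = (A $$ (a,a) :: complex)"
proof -
  have "conjugate (unit_vec n a) = (unit_vec n a :: complex vec)"
    by (rule eq_vecI) (auto simp: unit_vec_def)
  then show ?thesis
    using assms by (simp add: scalar_prod_left_unit scalar_prod_right_unit)
qed

definition two_entry_vec :: "nat \<Rightarrow> nat \<Rightarrow> nat \<Rightarrow> complex \<Rightarrow> complex \<Rightarrow> complex vec" where
  "two_entry_vec n a b x y = vec n (\<lambda>i. if i = a then x else if i = b then y else 0)"

lemma quadratic_form_two_entry_vec:
  fixes A :: "complex mat"
  assumes A: "A \<in> carrier_mat n n" and ab: "a \<noteq> b" "a < n" "b < n"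
  shows "conjugate (two_entry_vec n a b x y) \<bullet> (A *\<^sub>v two_entry_vec n a b x y)
    = cnj x * x * A $$ (a,a) + cnj x * y * A $$ (a,b) + cnj y * x * A $$ (b,a) + cnj y * y * A $$ (b,b)"
proof -
  have two: "(\<Sum>j<n. f j * (if j = a then u else if j = b then v else 0)) = f a * u + f b * v"
    for f :: "nat \<Rightarrow> complex" and u v
  proof -
    have "(\<Sum>j<n. f j * (if j = a then u else if j = b then v else 0))
        = (\<Sum>j\<in>{a,b}. f j * (if j = a then u else if j = b then v else 0))"
      by (rule sum.mono_neutral_right) (use ab in auto)
    then show ?thesis using ab by simp
  qed
  have Av: "A *\<^sub>v two_entry_vec n a b x y = vec n (\<lambda>i. A $$ (i,a) * x + A $$ (i,b) * y)"
    by (rule eq_vecI) (use A in \<open>auto simp: two_entry_vec_def scalar_prod_def atLeast0LessThan two\<close>)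
  have "conjugate (two_entry_vec n a b x y) \<bullet> (A *\<^sub>v two_entry_vec n a b x y)
     = (\<Sum>i<n. (A $$ (i,a) * x + A $$ (i,b) * y) * (if i = a then cnj x else if i = b then cnj y else 0))"
    unfolding Av by (auto simp: two_entry_vec_def scalar_prod_def atLeast0LessThan mult.commute
        intro!: sum.cong)
  also have "\<dots> = (A $$ (a,a) * x + A $$ (a,b) * y) * cnj x + (A $$ (b,a) * x + A $$ (b,b) * y) * cnj y"
    by (rule two)
  finally show ?thesis by (simp add: algebra_simps)
qed

lemma psd_diag:
  assumes P: "psd_mat n A" and a: "a < n"
  shows "Im (A $$ (a,a)) = 0" "Re (A $$ (a,a)) \<ge> 0"
proof -
  have "A \<in> carrier_mat n n" using P unfolding psd_mat_def by blast
  then have "conjugate (unit_vec n a) \<bullet> (A *\<^sub>v unit_vec n a) = A $$ (a,a)"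
    by (rule quadratic_form_unit_vec[OF _ a])
  with psd_matD[OF P unit_vec_carrier[of n a]] show "Im (A $$ (a,a)) = 0" "Re (A $$ (a,a)) \<ge> 0"
    by auto
qed

lemma psd_hermitian:
  assumes P: "psd_mat n A" and ab: "a < n" "b < n"
  shows "A $$ (b,a) = cnj (A $$ (a,b))"
proof (cases "a = b")
  case True
  then show ?thesis using psd_diag[OF P ab(1)] by (simp add: complex_eq_iff)
next
  case False
  have A: "A \<in> carrier_mat n n" using P unfolding psd_mat_def by blast
  have v: "two_entry_vec n a b x y \<in> carrier_vec n" for x y by (simp add: two_entry_vec_def)
  have real: "Im (A $$ (a,a)) = 0" "Im (A $$ (b,b)) = 0" using psd_diag[OF P] ab by auto
  have "Im (A $$ (a,b) + A $$ (b,a)) = 0"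
    using psd_matD(1)[OF P v[of 1 1]] quadratic_form_two_entry_vec[OF A False ab, of 1 1] real by simp
  moreover have "Re (A $$ (a,b) - A $$ (b,a)) = 0"
    using psd_matD(1)[OF P v[of 1 \<i>]] quadratic_form_two_entry_vec[OF A False ab, of 1 \<i>] real by simp
  ultimately show ?thesis by (simp add: complex_eq_iff)
qed

text \<open>At \<open>s e\<^sub>a - cnj c e\<^sub>b\<close> with \<open>c = A\<^sub>a\<^sub>b\<close>, the form is a real quadratic polynomial in \<open>s\<close>
  that is nonnegative everywhere.\<close>

lemma psd_entry_bound:
  assumes P: "psd_mat n A" and ab: "a < n" "b < n"
  shows "(cmod (A $$ (a,b)))\<^sup>2 \<le> Re (A $$ (a,a)) * Re (A $$ (b,b))"
proof (cases "a = b")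
  case True
  then show ?thesis using psd_diag[OF P ab(1)] by (simp add: cmod_def power2_eq_square)
next
  case False
  have A: "A \<in> carrier_mat n n" using P unfolding psd_mat_def by blast
  define c where "c = A $$ (a,b)"
  define N where "N = (cmod c)\<^sup>2"
  define \<alpha> where "\<alpha> = Re (A $$ (a,a))"
  define \<beta> where "\<beta> = Re (A $$ (b,b))"
  have diag: "A $$ (a,a) = of_real \<alpha>" "A $$ (b,b) = of_real \<beta>" "\<alpha> \<ge> 0" "\<beta> \<ge> 0"
    using psd_diag[OF P] ab unfolding \<alpha>_def \<beta>_def by (auto simp: complex_eq_iff)
  have herm: "A $$ (b,a) = cnj c" using psd_hermitian[OF P ab] unfolding c_def .
  have quadratic: "s\<^sup>2 * \<alpha> - 2 * s * N + N * \<beta> \<ge> 0" for s :: real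
  proof -
    have "two_entry_vec n a b (of_real s) (- cnj c) \<in> carrier_vec n" by (simp add: two_entry_vec_def)
    from psd_matD(2)[OF P this] show ?thesis
      unfolding quadratic_form_two_entry_vec[OF A False ab] diag(1,2) herm c_def[symmetric] N_def
      by (simp add: cmod_def power2_eq_square algebra_simps)
  qed
  have "N \<ge> 0" unfolding N_def by simp
  have "N \<le> \<alpha> * \<beta>"
  proof (cases "\<alpha> > 0")
    case True
    with quadratic[of "N / \<alpha>"] have "N * (\<alpha> * \<beta> - N) \<ge> 0"
      by (simp add: power2_eq_square field_simps)
    then show ?thesis
      using \<open>N \<ge> 0\<close> by (cases "N = 0") (auto simp: zero_le_mult_iff diag)
  next
    case False
    with diag have "\<alpha> = 0" by simp
    with quadratic[of "\<beta> + 1"] have "N * (\<beta> + 2) \<le> 0" by (simp add: algebra_simps)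
    then show ?thesis
      using \<open>N \<ge> 0\<close> \<open>\<alpha> = 0\<close> diag by (auto simp: mult_le_0_iff)
  qed
  then show ?thesis unfolding N_def c_def \<alpha>_def \<beta>_def .
qed

lemma psd_entry_product_bound:
  assumes PA: "psd_mat n A" and PB: "psd_mat n B" and ab: "a < n" "b < n"
  defines "\<gamma> i \<equiv> (Re (A $$ (i,i)) + Re (B $$ (i,i))) / 2"
  shows "cmod (A $$ (a,b) * B $$ (a,b)) \<le> \<gamma> a * \<gamma> b"
proof -
  define \<alpha> where "\<alpha> i = Re (A $$ (i,i))" for i
  define \<beta> where "\<beta> i = Re (B $$ (i,i))" for i
  have pos: "\<alpha> i \<ge> 0" "\<beta> i \<ge> 0" if "i < n" for i
    using psd_diag(2)[OF PA that] psd_diag(2)[OF PB that] unfolding \<alpha>_def \<beta>_def by auto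
  have am_gm: "\<alpha> i * \<beta> i \<le> (\<gamma> i)\<^sup>2" for i
    using sum_squares_ge_zero[of "\<alpha> i - \<beta> i" 0] unfolding \<gamma>_def \<alpha>_def \<beta>_def
    by (simp add: power2_eq_square algebra_simps)
  have "(cmod (A $$ (a,b) * B $$ (a,b)))\<^sup>2 = (cmod (A $$ (a,b)))\<^sup>2 * (cmod (B $$ (a,b)))\<^sup>2"
    by (simp add: norm_mult power_mult_distrib)
  also have "\<dots> \<le> (\<alpha> a * \<alpha> b) * (\<beta> a * \<beta> b)"
    using psd_entry_bound[OF PA ab] psd_entry_bound[OF PB ab] pos ab
    unfolding \<alpha>_def \<beta>_def by (intro mult_mono) auto
  also have "\<dots> = (\<alpha> a * \<beta> a) * (\<alpha> b * \<beta> b)" by (simp add: algebra_simps)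
  also have "\<dots> \<le> (\<gamma> a * \<gamma> b)\<^sup>2"
    unfolding power_mult_distrib using am_gm pos ab by (intro mult_mono) auto
  finally show ?thesis
    by (rule power2_le_imp_le) (use pos ab in \<open>auto simp: \<gamma>_def \<alpha>_def \<beta>_def\<close>)
qed

lemma Re_sum_entry_products_state_le_1:
  assumes SA: "state_mat n A" and SB: "state_mat n B"
  shows "Re (\<Sum>a<n. \<Sum>b<n. A $$ (a,b) * B $$ (a,b)) \<le> 1"
proof -
  have PA: "psd_mat n A" and PB: "psd_mat n B" using SA SB unfolding state_mat_def by auto
  define \<gamma> where "\<gamma> i = (Re (A $$ (i,i)) + Re (B $$ (i,i))) / 2" for i
  have "Re (\<Sum>a<n. \<Sum>b<n. A $$ (a,b) * B $$ (a,b)) = (\<Sum>a<n. \<Sum>b<n. Re (A $$ (a,b) * B $$ (a,b)))"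
    by (simp add: Re_sum)
  also have "\<dots> \<le> (\<Sum>a<n. \<Sum>b<n. \<gamma> a * \<gamma> b)"
    using psd_entry_product_bound[OF PA PB] complex_Re_le_cmod order_trans
    unfolding \<gamma>_def by (intro sum_mono) blast
  also have "\<dots> = (\<Sum>a<n. \<gamma> a) * (\<Sum>b<n. \<gamma> b)" by (simp add: sum_product)
  also have "(\<Sum>a<n. \<gamma> a) = 1"
  proof -
    have "(\<Sum>a<n. Re (A $$ (a,a))) = 1" "(\<Sum>a<n. Re (B $$ (a,a))) = 1"
      using SA SB PA PB unfolding state_mat_def psd_mat_def mtrace_def by (auto simp flip: Re_sum)
    then show ?thesis
      unfolding \<gamma>_def by (simp add: sum_divide_distrib[symmetric] sum.distrib)
  qed
  finally show ?thesis by simp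
qed

text \<open>The sum is \<open>d \<langle>\<Phi>|\<sigma>|\<Phi>\<rangle>\<close> for the maximally entangled unit vector \<open>\<Phi>\<close>.\<close>

lemma separable_state_Re_diag_sum_le_1:
  assumes "separable_state d d \<sigma>"
  shows "Re (\<Sum>a<d. \<Sum>b<d. \<sigma> $$ (a*d + a, b*d + b)) \<le> 1"
proof -
  obtain N :: nat and p A B where h: "\<forall>i<N. p i \<ge> 0 \<and> state_mat d (A i) \<and> state_mat d (B i)"
    and sum_p: "(\<Sum>i<N. p i) = 1"
    and \<sigma>: "\<sigma> = mat (d*d) (d*d) (\<lambda>(r,s). \<Sum>i<N. complex_of_real (p i) * kron d d (A i) (B i) $$ (r,s))"
    using assms unfolding separable_state_def by blast
  have entry: "\<sigma> $$ (a*d + a, b*d + b) = (\<Sum>i<N. complex_of_real (p i) * (A i $$ (a,b) * B i $$ (a,b)))"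
    if "a < d" "b < d" for a b
    using that mult_add_less_mult[OF that(1) that(1)] mult_add_less_mult[OF that(2) that(2)]
    by (simp add: \<sigma> kron_def)
  have "Re (\<Sum>a<d. \<Sum>b<d. \<sigma> $$ (a*d + a, b*d + b))
     = (\<Sum>i<N. p i * Re (\<Sum>a<d. \<Sum>b<d. A i $$ (a,b) * B i $$ (a,b)))"
    by (simp add: entry sum_distrib_left sum.swap[of _ "{..<N}"] Re_sum)
  also have "\<dots> \<le> (\<Sum>i<N. p i)"
    using h Re_sum_entry_products_state_le_1 by (intro sum_mono) (simp add: mult_left_le)
  finally show ?thesis using sum_p by simp
qed

definition max_entangled_state :: "nat \<Rightarrow> complex mat" where
  "max_entangled_state d = mat (d*d) (d*d)
     (\<lambda>(p,q). if p div d = p mod d \<and> q div d = q mod d then 1 / of_nat d else 0)"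

lemma psd_mat_max_entangled_state: "psd_mat (d*d) (max_entangled_state d)"
  unfolding psd_mat_def
proof (intro conjI ballI)
  show "max_entangled_state d \<in> carrier_mat (d*d) (d*d)"
    unfolding max_entangled_state_def by simp
next
  let ?D = "\<lambda>p. p div d = p mod d"
  fix v :: "complex vec" assume v: "v \<in> carrier_vec (d*d)"
  define s where "s = (\<Sum>q<d*d. if ?D q then v $ q else 0)"
  have Mv: "max_entangled_state d *\<^sub>v v = vec (d*d) (\<lambda>p. if ?D p then s / of_nat d else 0)"
    by (rule eq_vecI) (use v in \<open>auto simp: max_entangled_state_def scalar_prod_def
        atLeast0LessThan s_def sum_divide_distrib intro!: sum.cong\<close>)
  have "conjugate v \<bullet> (max_entangled_state d *\<^sub>v v)
      = (\<Sum>p<d*d. (if ?D p then cnj (v $ p) else 0) * (s / of_nat d))"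
    unfolding Mv using v by (auto simp: scalar_prod_def atLeast0LessThan intro!: sum.cong)
  also have "\<dots> = (\<Sum>p<d*d. if ?D p then cnj (v $ p) else 0) * (s / of_nat d)"
    by (rule sum_distrib_right[symmetric])
  also have "(\<Sum>p<d*d. if ?D p then cnj (v $ p) else 0) = cnj s"
    unfolding s_def cnj_sum by (rule sum.cong) auto
  also have "cnj s * (s / of_nat d) = of_real ((cmod s)\<^sup>2 / real d)"
    unfolding of_real_divide complex_norm_square by (simp add: mult.commute)
  finally show "Im (conjugate v \<bullet> (max_entangled_state d *\<^sub>v v)) = 0"
    and "0 \<le> Re (conjugate v \<bullet> (max_entangled_state d *\<^sub>v v))" by simp_all
qed

lemma state_mat_max_entangled_state:
  assumes "d > 0"
  shows "state_mat (d*d) (max_entangled_state d)"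
proof -
  have "mtrace (max_entangled_state d)
      = (\<Sum>p<d*d. (\<lambda>i a. if i = a then 1 / of_nat d else 0) (p div d) (p mod d))"
    unfolding mtrace_def by (auto simp: max_entangled_state_def intro!: sum.cong)
  also have "\<dots> = (\<Sum>i<d. \<Sum>a<d. if i = a then 1 / of_nat d else (0::complex))"
    by (rule sum_mult_div_mod)
  finally show ?thesis
    using assms psd_mat_max_entangled_state unfolding state_mat_def by simp
qed

lemma max_entangled_state_block:
  assumes ab: "a < d" "b < d"
  shows "mat d d (\<lambda>(i,j). max_entangled_state d $$ (i*d + a, j*d + b))
    = (1 / of_nat d) \<cdot>\<^sub>m unit_mat d a b"
proof (rule eq_matI)
  fix i j assume "i < dim_row ((1 / of_nat d) \<cdot>\<^sub>m unit_mat d a b)"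
    and "j < dim_col ((1 / of_nat d) \<cdot>\<^sub>m unit_mat d a b)"
  then have "i < d" "j < d" by (simp_all add: unit_mat_def)
  then show "mat d d (\<lambda>(i,j). max_entangled_state d $$ (i*d + a, j*d + b)) $$ (i,j)
      = ((1 / of_nat d) \<cdot>\<^sub>m unit_mat d a b) $$ (i,j)"
    using ab mult_add_less_mult[of i d a d] mult_add_less_mult[of j d b d]
    by (simp add: max_entangled_state_def unit_mat_def)
qed (simp_all add: unit_mat_def)

text \<open>Apply \<open>\<psi>\<close> to half of the maximally entangled state: the Choi matrix \<open>(\<psi> \<otimes> id)(\<Phi>)\<close>
  is separable, and its diagonal-block sum equals \<open>tr(T\<^sub>\<psi>) / d\<close>.\<close>

lemma entanglement_breaking_Re_trace_transfer_le:
  assumes EB: "entanglement_breaking d \<psi>" and d: "d > 0"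
    and hom: "\<And>c a b i j. a < d \<Longrightarrow> b < d \<Longrightarrow> i < d \<Longrightarrow> j < d \<Longrightarrow>
       \<psi> (c \<cdot>\<^sub>m unit_mat d a b) $$ (i,j) = c * \<psi> (unit_mat d a b) $$ (i,j)"
  shows "Re (mtrace (transfer_mat d \<psi>)) \<le> real d"
proof -
  define \<sigma> where "\<sigma> = tensor_id d d \<psi> (max_entangled_state d)"
  have sep: "separable_state d d \<sigma>"
    using EB state_mat_max_entangled_state[OF d] unfolding entanglement_breaking_def \<sigma>_def by blast
  have entry: "\<sigma> $$ (a*d + a, b*d + b) = \<psi> (unit_mat d a b) $$ (a,b) / of_nat d"
    if ab: "a < d" "b < d" for a b
  proof -
    have "\<sigma> $$ (a*d + a, b*d + b)
        = \<psi> (mat d d (\<lambda>(i,j). max_entangled_state d $$ (i*d + a, j*d + b))) $$ (a,b)"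
      using ab mult_add_less_mult[OF ab(1) ab(1)] mult_add_less_mult[OF ab(2) ab(2)]
      by (simp add: \<sigma>_def tensor_id_def)
    also have "\<dots> = \<psi> ((1 / of_nat d) \<cdot>\<^sub>m unit_mat d a b) $$ (a,b)"
      by (simp only: max_entangled_state_block[OF ab])
    finally show ?thesis using hom[OF ab ab] by simp
  qed
  have "(\<Sum>a<d. \<Sum>b<d. \<sigma> $$ (a*d + a, b*d + b)) = mtrace (transfer_mat d \<psi>) / of_nat d"
    unfolding mtrace_transfer_mat sum_divide_distrib by (auto intro!: sum.cong simp: entry)
  then have "Re (mtrace (transfer_mat d \<psi>)) / real d = Re (\<Sum>a<d. \<Sum>b<d. \<sigma> $$ (a*d + a, b*d + b))"
    by simp
  also have "\<dots> \<le> 1" by (rule separable_state_Re_diag_sum_le_1[OF sep])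
  finally show ?thesis using d by (simp add: divide_le_eq)
qed

lemma mtrace_mult_comm:
  fixes A B :: "complex mat"
  assumes A: "A \<in> carrier_mat n m" and B: "B \<in> carrier_mat m n"
  shows "mtrace (A * B) = mtrace (B * A)"
proof -
  have "mtrace (A * B) = (\<Sum>i<n. \<Sum>t<m. A $$ (i,t) * B $$ (t,i))"
    unfolding mtrace_def using A B by (auto simp: scalar_prod_def atLeast0LessThan intro!: sum.cong)
  also have "\<dots> = (\<Sum>t<m. \<Sum>i<n. B $$ (t,i) * A $$ (i,t))"
    by (subst sum.swap) (simp add: mult.commute)
  also have "\<dots> = mtrace (B * A)"
    unfolding mtrace_def using A B by (auto simp: scalar_prod_def atLeast0LessThan intro!: sum.cong)
  finally show ?thesis .
qed

lemma upper_triangular_mult: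
  fixes A B :: "'a::comm_semiring_1 mat"
  assumes A: "A \<in> carrier_mat n n" and B: "B \<in> carrier_mat n n"
    and utA: "upper_triangular A" and utB: "upper_triangular B"
  shows "upper_triangular (A * B)"
    and "j < n \<Longrightarrow> (A * B) $$ (j,j) = A $$ (j,j) * B $$ (j,j)"
proof -
  have entry: "(A * B) $$ (i,j) = (\<Sum>t<n. A $$ (i,t) * B $$ (t,j))" if "i < n" "j < n" for i j
    using that A B by (simp add: scalar_prod_def atLeast0LessThan)
  have vanish: "A $$ (i,t) * B $$ (t,j) = 0" if "i < n" "t < n" "t < i \<or> j < t" for i j t
    using that A B upper_triangularD[OF utA] upper_triangularD[OF utB] by auto
  show "upper_triangular (A * B)"
  proof (rule upper_triangularI)
    fix i j assume ji: "j < i" and "i < dim_row (A * B)"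
    then have i: "i < n" and j: "j < n" using A by auto
    have "A $$ (i,t) * B $$ (t,j) = 0" if "t < n" for t
      by (rule vanish[OF i that]) (use ji in linarith)
    then show "(A * B) $$ (i,j) = 0"
      using entry[OF i j] by simp
  qed
  assume j: "j < n"
  have "A $$ (j,t) * B $$ (t,j) = 0" if "t < n" "t \<noteq> j" for t
    by (rule vanish[OF j that(1)]) (use that(2) in linarith)
  then have "(\<Sum>t<n. A $$ (j,t) * B $$ (t,j)) = (\<Sum>t\<in>{j}. A $$ (j,t) * B $$ (t,j))"
    by (intro sum.mono_neutral_right) (use j in auto)
  then show "(A * B) $$ (j,j) = A $$ (j,j) * B $$ (j,j)"
    using entry[OF j j] by simp
qed

lemma upper_triangular_pow:
  fixes A :: "'a::comm_semiring_1 mat"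
  assumes A: "A \<in> carrier_mat n n" and ut: "upper_triangular A"
  shows "upper_triangular (A ^\<^sub>m k) \<and> (\<forall>j<n. (A ^\<^sub>m k) $$ (j,j) = A $$ (j,j) ^ k)"
proof (induction k)
  case 0
  show ?case using A by simp
next
  case (Suc k)
  have "A ^\<^sub>m k \<in> carrier_mat n n" using A by simp
  then show ?case
    using upper_triangular_mult[OF _ A _ ut] Suc by (simp add: mult.commute)
qed

lemma triangularization:
  fixes A :: "complex mat"
  assumes A: "A \<in> carrier_mat n n" and es: "char_poly A = (\<Prod>e\<leftarrow>es. [:- e, 1:])"
  obtains B P Q where "similar_mat_wit A B P Q" "B \<in> carrier_mat n n" "upper_triangular B"
    "\<And>j. j < n \<Longrightarrow> B $$ (j,j) = es ! j"
proof -
  obtain B P Q where "schur_decomposition A es = (B,P,Q)" by (cases "schur_decomposition A es")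
  with schur_decomposition[OF A es] have sim: "similar_mat_wit A B P Q"
    and "upper_triangular B" "diag_mat B = es" by auto
  moreover have "B \<in> carrier_mat n n"
    using sim A unfolding similar_mat_wit_def Let_def by auto
  ultimately show ?thesis by (intro that) (auto simp: diag_mat_def)
qed

lemma mtrace_pow_eq_sum_eigenvalues:
  fixes A :: "complex mat"
  assumes A: "A \<in> carrier_mat n n" and es: "char_poly A = (\<Prod>e\<leftarrow>es. [:- e, 1:])"
  shows "mtrace (A ^\<^sub>m k) = (\<Sum>j<n. es ! j ^ k)"
proof -
  obtain B P Q where sim: "similar_mat_wit A B P Q" and B: "B \<in> carrier_mat n n"
    and ut: "upper_triangular B" and diag: "\<And>j. j < n \<Longrightarrow> B $$ (j,j) = es ! j"
    using triangularization[OF A es] by blast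
  have P: "P \<in> carrier_mat n n" and Q: "Q \<in> carrier_mat n n" and QP: "Q * P = 1\<^sub>m n"
    using sim A unfolding similar_mat_wit_def Let_def by auto
  have Bk: "B ^\<^sub>m k \<in> carrier_mat n n" using B by simp
  have "mtrace (A ^\<^sub>m k) = mtrace (P * B ^\<^sub>m k * Q)"
    by (simp add: similar_mat_wit_pow_id[OF sim])
  also have "\<dots> = mtrace (Q * (P * B ^\<^sub>m k))"
    by (rule mtrace_mult_comm) (use P Q Bk in auto)
  also have "Q * (P * B ^\<^sub>m k) = (Q * P) * B ^\<^sub>m k"
    using P Q Bk by (simp add: assoc_mult_mat)
  also have "\<dots> = B ^\<^sub>m k"
    using QP B by simp
  also have "mtrace (B ^\<^sub>m k) = (\<Sum>j<n. es ! j ^ k)"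
    unfolding mtrace_def using upper_triangular_pow[OF B ut, of k] Bk diag
    by (auto intro!: sum.cong)
  finally show ?thesis .
qed

text \<open>The diagonal of a triangularization \<open>B = Q A P\<close> depends linearly on \<open>A\<close>, so entrywise
  convergence of powers of \<open>A\<close> along a sequence of exponents carries over to each eigenvalue.\<close>

lemma convergent_eigenvalue_powers:
  fixes A :: "complex mat"
  assumes A: "A \<in> carrier_mat n n" and es: "char_poly A = (\<Prod>e\<leftarrow>es. [:- e, 1:])" and j: "j < n"
    and conv: "\<And>u t. u < n \<Longrightarrow> t < n \<Longrightarrow> convergent (\<lambda>k. (A ^\<^sub>m f k) $$ (u,t))"
  shows "convergent (\<lambda>k. es ! j ^ f k)"
proof -
  obtain B P Q where sim: "similar_mat_wit A B P Q" and B: "B \<in> carrier_mat n n"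
    and ut: "upper_triangular B" and diag: "\<And>j. j < n \<Longrightarrow> B $$ (j,j) = es ! j"
    using triangularization[OF A es] by blast
  have P: "P \<in> carrier_mat n n" and Q: "Q \<in> carrier_mat n n"
    using sim A unfolding similar_mat_wit_def Let_def by auto
  have "es ! j ^ f k = (Q * A ^\<^sub>m f k * P) $$ (j,j)" for k
    using upper_triangular_pow[OF B ut, of "f k"] j diag
      similar_mat_wit_pow_id[OF similar_mat_wit_sym[OF sim], of "f k"] by simp
  also have "(Q * A ^\<^sub>m f k * P) $$ (j,j)
      = (\<Sum>t<n. (\<Sum>u<n. Q $$ (j,u) * (A ^\<^sub>m f k) $$ (u,t)) * P $$ (t,j))" for k
    using P Q A j by (simp add: scalar_prod_def atLeast0LessThan)
  finally have eq: "es ! j ^ f k = (\<Sum>t<n. (\<Sum>u<n. Q $$ (j,u) * (A ^\<^sub>m f k) $$ (u,t)) * P $$ (t,j))"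
    for k .
  show ?thesis
    unfolding eq by (intro convergent_sum convergent_mult convergent_const conv) auto
qed

lemma sum_order_roots_prod_linear:
  fixes es :: "complex list"
  shows "(\<Sum>z\<in>{z. poly (\<Prod>e\<leftarrow>es. [:- e, 1:]) z = 0 \<and> P z}. Polynomial.order z (\<Prod>e\<leftarrow>es. [:- e, 1:]))
    = length (filter P es)"
proof -
  have roots: "poly (\<Prod>e\<leftarrow>es. [:- e, 1:]) z = 0 \<longleftrightarrow> z \<in> set es" for z
    by (induction es) auto
  have order: "Polynomial.order z (\<Prod>e\<leftarrow>es. [:- e, 1:]) = count_list es z" for z
  proof -
    have "Polynomial.order z (\<Prod>e\<leftarrow>es. [:- e, 1:]) = (\<Sum>e\<leftarrow>es. Polynomial.order z [:- e, 1:])"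
      by (subst order_prod_list) (auto simp: comp_def)
    also have "\<dots> = count_list es z"
      by (induction es) (auto simp: order_linear')
    finally show ?thesis .
  qed
  have count_filter: "P z \<Longrightarrow> count_list (filter P es) z = count_list es z" for z
    by (induction es) auto
  have "(\<Sum>z\<in>{z. z \<in> set es \<and> P z}. count_list es z) = (\<Sum>z\<in>set (filter P es). count_list (filter P es) z)"
    by (rule sum.cong) (auto simp: count_filter)
  also have "\<dots> = length (filter P es)"
    by (rule sum_count_set) auto
  finally show ?thesis by (simp add: roots order)
qed

lemma peripheral_count_eq_card:
  assumes es: "char_poly (transfer_mat d \<phi>) = (\<Prod>e\<leftarrow>es. [:- e, 1:])" and len: "length es = d*d"
  shows "peripheral_count d \<phi> = card {j. j < d*d \<and> cmod (es ! j) = 1}"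
  unfolding peripheral_count_def es sum_order_roots_prod_linear length_filter_conv_card len ..

lemma limit_powers_eq_0_if_norm_neq_1:
  fixes e w :: "'a::real_normed_div_algebra"
  assumes r: "strict_mono r" and lim: "(\<lambda>n. e ^ r n) \<longlonglongrightarrow> w" and e: "norm e \<noteq> 1"
  shows "w = 0"
proof -
  obtain K where K: "\<And>n. norm (e ^ r n) \<le> K"
    using convergent_imp_Bseq[OF convergentI[OF lim]] by (auto simp: Bseq_def)
  have "norm e < 1"
  proof (rule ccontr)
    assume "\<not> norm e < 1"
    with e have "norm e > 1" by simp
    then obtain n where "K < norm e ^ n" using real_arch_pow by blast
    also have "\<dots> \<le> norm e ^ r n"
      using \<open>norm e > 1\<close> seq_suble[OF r, of n] by (intro power_increasing) auto
    also have "\<dots> \<le> K" using K[of n] by (simp add: norm_power)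
    finally show False by simp
  qed
  then have "(\<lambda>n. e ^ n) \<longlonglongrightarrow> 0" by (rule LIMSEQ_power_zero)
  then have "(\<lambda>n. e ^ r n) \<longlonglongrightarrow> 0" using LIMSEQ_subseq_LIMSEQ[OF _ r] by (simp add: comp_def)
  then show ?thesis using lim LIMSEQ_unique by blast
qed

lemma norm_limit_powers_eq_1:
  fixes e w :: "'a::real_normed_div_algebra"
  assumes lim: "(\<lambda>n. e ^ r n) \<longlonglongrightarrow> w" and e: "norm e = 1"
  shows "norm w = 1"
proof -
  have "(\<lambda>n. norm (e ^ r n)) \<longlonglongrightarrow> norm w" using lim by (rule tendsto_norm)
  moreover have "(\<lambda>n. norm (e ^ r n)) = (\<lambda>n. 1)" using e by (simp add: norm_power)
  ultimately show ?thesis using LIMSEQ_unique tendsto_const by metis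
qed

lemma unimodular_product_approx:
  fixes u v w :: complex
  assumes v: "cmod v = 1" and w: "cmod w = 1"
  shows "cmod (u * cnj v * cnj v * w - 1) \<le> cmod (u - w) + 2 * cmod (v - w)"
proof -
  have "w * cnj w = 1" using w by (simp flip: complex_norm_square)
  then have "u * cnj v * cnj v * w - 1 = (u - w) * (cnj v * cnj v * w)
      + (cnj v - cnj w) * (w * cnj v * w) + (cnj v - cnj w) * (w * cnj w * w)"
    by (simp add: algebra_simps)
  also have "cmod \<dots> \<le> cmod ((u - w) * (cnj v * cnj v * w))
      + cmod ((cnj v - cnj w) * (w * cnj v * w)) + cmod ((cnj v - cnj w) * (w * cnj w * w))"
    by (meson norm_triangle_ineq order_trans add_mono order_refl)
  also have "\<dots> = cmod (u - w) + cmod (v - w) + cmod (v - w)"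
    using v w by (simp add: norm_mult flip: complex_cnj_diff)
  finally show ?thesis by simp
qed

text \<open>If \<open>e\<^sup>a \<approx> w\<close> and \<open>e\<^sup>b \<approx> w\<close> for two exponents \<open>b > 2a\<close> of the subsequence, then
  \<open>m = b - 2a\<close> satisfies \<open>e\<^sup>m w = e\<^sup>b (cnj e\<^sup>a)\<^sup>2 w \<approx> w (cnj w)\<^sup>2 w = 1\<close>, simultaneously for all \<open>e\<close>.\<close>

lemma unimodular_powers_return:
  fixes e w :: "'i \<Rightarrow> complex"
  assumes r: "strict_mono r" and J: "finite J"
    and unit: "\<And>j. j \<in> J \<Longrightarrow> cmod (e j) = 1"
    and lim: "\<And>j. j \<in> J \<Longrightarrow> (\<lambda>n. e j ^ r n) \<longlonglongrightarrow> w j"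
    and \<epsilon>: "\<epsilon> > 0"
  obtains m where "\<And>j. j \<in> J \<Longrightarrow> cmod (e j ^ m * w j - 1) < \<epsilon>"
proof -
  have "eventually (\<lambda>n. cmod (e j ^ r n - w j) < \<epsilon> / 3) sequentially" if "j \<in> J" for j
    using tendstoD[OF lim[OF that], of "\<epsilon> / 3"] \<epsilon> by (simp add: dist_norm)
  then have "eventually (\<lambda>n. \<forall>j\<in>J. cmod (e j ^ r n - w j) < \<epsilon> / 3) sequentially"
    by (intro eventually_ball_finite[OF J] ballI)
  then obtain K where K: "\<And>n j. n \<ge> K \<Longrightarrow> j \<in> J \<Longrightarrow> cmod (e j ^ r n - w j) < \<epsilon> / 3"
    unfolding eventually_sequentially by blast
  define a where "a = r K"
  define b where "b = r (max K (2*a + 1))"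
  have "b \<ge> 2*a + 1" using seq_suble[OF r, of "max K (2*a + 1)"] unfolding b_def by linarith
  then have b: "b = (b - 2*a) + a + a" by simp
  have "cmod (e j ^ (b - 2*a) * w j - 1) < \<epsilon>" if j: "j \<in> J" for j
  proof -
    have ea: "cmod (e j ^ a) = 1" using unit[OF j] by (simp add: norm_power)
    then have aa: "e j ^ a * cnj (e j ^ a) = 1" using complex_norm_square[of "e j ^ a"] by simp
    have "e j ^ b = e j ^ (b - 2*a) * e j ^ a * e j ^ a"
      using b by (metis power_add)
    then have "e j ^ b * cnj (e j ^ a) * cnj (e j ^ a)
        = e j ^ (b - 2*a) * (e j ^ a * cnj (e j ^ a)) * (e j ^ a * cnj (e j ^ a))"
      by (simp only: mult_ac)
    then have "e j ^ (b - 2*a) = e j ^ b * cnj (e j ^ a) * cnj (e j ^ a)"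
      unfolding aa by simp
    then have "cmod (e j ^ (b - 2*a) * w j - 1) \<le> cmod (e j ^ b - w j) + 2 * cmod (e j ^ a - w j)"
      using unimodular_product_approx[OF ea norm_limit_powers_eq_1[OF lim[OF j] unit[OF j]]]
      by simp
    also have "\<dots> < \<epsilon>"
      using K[OF _ j, of K] K[OF _ j, of "max K (2*a + 1)"] unfolding a_def b_def by simp
    finally show ?thesis .
  qed
  then show ?thesis by (rule that)
qed

lemma card_unimodular_le_if_Re_power_sums_bounded:
  fixes e w :: "nat \<Rightarrow> complex"
  assumes r: "strict_mono r"
    and lim: "\<And>j. j < n \<Longrightarrow> (\<lambda>k. e j ^ r k) \<longlonglongrightarrow> w j"
    and bound: "\<And>m. Re (\<Sum>j<n. e j ^ m * w j) \<le> c"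
  shows "real (card {j. j < n \<and> cmod (e j) = 1}) \<le> c"
proof (rule field_le_epsilon)
  define J where "J = {j. j < n \<and> cmod (e j) = 1}"
  have "w j = 0" if "j < n" "j \<notin> J" for j
    using limit_powers_eq_0_if_norm_neq_1[OF r lim] that unfolding J_def by simp
  then have sum_J: "(\<Sum>j<n. e j ^ m * w j) = (\<Sum>j\<in>J. e j ^ m * w j)" for m
    by (intro sum.mono_neutral_right) (auto simp: J_def)
  fix \<epsilon> :: real assume "\<epsilon> > 0"
  define \<delta> where "\<delta> = \<epsilon> / (real (card J) + 1)"
  have \<delta>: "\<delta> > 0" "real (card J) * \<delta> \<le> \<epsilon>"
    using \<open>\<epsilon> > 0\<close> unfolding \<delta>_def by (auto simp: field_simps)
  have J: "finite J" "\<And>j. j \<in> J \<Longrightarrow> cmod (e j) = 1" "\<And>j. j \<in> J \<Longrightarrow> (\<lambda>k. e j ^ r k) \<longlonglongrightarrow> w j"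
    using lim unfolding J_def by auto
  obtain m where m: "\<And>j. j \<in> J \<Longrightarrow> cmod (e j ^ m * w j - 1) < \<delta>"
    using unimodular_powers_return[of r J e w \<delta>, OF r J \<delta>(1)] by blast
  have "1 - \<delta> \<le> Re (e j ^ m * w j)" if "j \<in> J" for j
    using m[OF that] complex_Re_le_cmod[of "1 - e j ^ m * w j"] by (simp add: norm_minus_commute)
  then have "real (card J) * (1 - \<delta>) \<le> Re (\<Sum>j<n. e j ^ m * w j)"
    using sum_mono[of J "\<lambda>_. 1 - \<delta>"] by (simp add: sum_J Re_sum)
  then show "real (card J) \<le> c + \<epsilon>"
    using bound[of m] \<delta>(2) by (simp add: algebra_simps)
qed

lemma limit_entrywise_homogeneous:
  assumes lin: "\<And>n. linear_map_mat d (F n)"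
    and conv: "\<And>X i j. X \<in> carrier_mat d d \<Longrightarrow> i < d \<Longrightarrow> j < d \<Longrightarrow>
        (\<lambda>n. F n X $$ (i,j)) \<longlonglongrightarrow> \<psi> X $$ (i,j)"
    and X: "X \<in> carrier_mat d d" and ij: "i < d" "j < d"
  shows "\<psi> (c \<cdot>\<^sub>m X) $$ (i,j) = c * \<psi> X $$ (i,j)"
proof -
  have "F n (c \<cdot>\<^sub>m X) $$ (i,j) = c * F n X $$ (i,j)" for n
    using linear_map_mat_smult[OF lin X] carrier_matD[OF linear_map_mat_carrier[OF lin X]] ij by simp
  then have "(\<lambda>n. F n (c \<cdot>\<^sub>m X) $$ (i,j)) \<longlonglongrightarrow> c * \<psi> X $$ (i,j)"
    by (simp add: tendsto_mult_left conv[OF X ij])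
  moreover have "(\<lambda>n. F n (c \<cdot>\<^sub>m X) $$ (i,j)) \<longlonglongrightarrow> \<psi> (c \<cdot>\<^sub>m X) $$ (i,j)"
    using X ij by (intro conv) auto
  ultimately show ?thesis using LIMSEQ_unique by blast
qed

lemma transfer_mat_entry_limit:
  assumes conv: "\<And>X i j. X \<in> carrier_mat d d \<Longrightarrow> i < d \<Longrightarrow> j < d \<Longrightarrow>
        (\<lambda>n. F n X $$ (i,j)) \<longlonglongrightarrow> \<psi> X $$ (i,j)"
    and "u < d*d" "t < d*d"
  shows "(\<lambda>n. transfer_mat d (F n) $$ (u,t)) \<longlonglongrightarrow> transfer_mat d \<psi> $$ (u,t)"
  using assms div_less_of_less_mult[of u d d] mod_less_divisor[of d u]
  by (cases "d = 0") (auto simp: transfer_mat_def intro!: conv)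

lemma convergent_eigenvalue_powers_transfer_mat:
  assumes L: "linear_map_mat d \<phi>"
    and conv: "\<And>X i j. X \<in> carrier_mat d d \<Longrightarrow> i < d \<Longrightarrow> j < d \<Longrightarrow>
        (\<lambda>n. (\<phi> ^^ f n) X $$ (i,j)) \<longlonglongrightarrow> \<psi> X $$ (i,j)"
    and es: "char_poly (transfer_mat d \<phi>) = (\<Prod>e\<leftarrow>es. [:- e, 1:])" and j: "j < d*d"
  shows "convergent (\<lambda>n. es ! j ^ f n)"
proof (rule convergent_eigenvalue_powers[OF transfer_mat_carrier es j])
  fix u t assume "u < d*d" "t < d*d"
  with conv have "(\<lambda>n. transfer_mat d (\<phi> ^^ f n) $$ (u,t)) \<longlonglongrightarrow> transfer_mat d \<psi> $$ (u,t)"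
    by (rule transfer_mat_entry_limit)
  then show "convergent (\<lambda>n. (transfer_mat d \<phi> ^\<^sub>m f n) $$ (u,t))"
    by (auto simp: transfer_mat_funpow[OF L] intro: convergentI)
qed

lemma mtrace_transfer_mat_limit:
  assumes conv: "\<And>X i j. X \<in> carrier_mat d d \<Longrightarrow> i < d \<Longrightarrow> j < d \<Longrightarrow>
        (\<lambda>n. F n X $$ (i,j)) \<longlonglongrightarrow> \<psi> X $$ (i,j)"
    and g: "\<And>X. X \<in> carrier_mat d d \<Longrightarrow> g X \<in> carrier_mat d d"
  shows "(\<lambda>n. mtrace (transfer_mat d (F n \<circ> g))) \<longlonglongrightarrow> mtrace (transfer_mat d (\<psi> \<circ> g))"
  unfolding mtrace_transfer_mat comp_def by (intro tendsto_sum conv g) auto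

text \<open>The sum is the trace of the transfer matrix of the entanglement-breaking map
  \<open>\<psi> \<circ> \<phi> ^^ m\<close>, computed as the limit of the traces of \<open>T\<^sub>\<phi> ^ (r n + m)\<close>.\<close>

lemma Re_sum_eigenvalue_limits_le:
  assumes QC: "quantum_channel d \<phi>" and d: "d > 0"
    and conv: "\<And>X i j. X \<in> carrier_mat d d \<Longrightarrow> i < d \<Longrightarrow> j < d \<Longrightarrow>
        (\<lambda>n. (\<phi> ^^ r n) X $$ (i,j)) \<longlonglongrightarrow> \<psi> X $$ (i,j)"
    and EB: "entanglement_breaking d \<psi>"
    and es: "char_poly (transfer_mat d \<phi>) = (\<Prod>e\<leftarrow>es. [:- e, 1:])"
    and w: "\<And>j. j < d*d \<Longrightarrow> (\<lambda>n. es ! j ^ r n) \<longlonglongrightarrow> w j"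
  shows "Re (\<Sum>j<d*d. es ! j ^ m * w j) \<le> real d"
proof -
  have L: "linear_map_mat d \<phi>" using QC unfolding quantum_channel_def by blast
  note Lpow = linear_map_mat_funpow[OF L]
  have trace_pow: "mtrace (transfer_mat d (\<phi> ^^ k)) = (\<Sum>j<d*d. es ! j ^ k)" for k
    by (simp add: transfer_mat_funpow[OF L] mtrace_pow_eq_sum_eigenvalues[OF _ es])
  have "(\<lambda>n. mtrace (transfer_mat d ((\<phi> ^^ r n) \<circ> \<phi> ^^ m))) \<longlonglongrightarrow> mtrace (transfer_mat d (\<psi> \<circ> \<phi> ^^ m))"
    by (rule mtrace_transfer_mat_limit[OF conv linear_map_mat_carrier[OF Lpow]])
  moreover have "mtrace (transfer_mat d ((\<phi> ^^ r n) \<circ> \<phi> ^^ m)) = (\<Sum>j<d*d. es ! j ^ r n * es ! j ^ m)" for n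
    by (simp add: trace_pow power_add flip: funpow_add)
  moreover have "(\<lambda>n. \<Sum>j<d*d. es ! j ^ r n * es ! j ^ m) \<longlonglongrightarrow> (\<Sum>j<d*d. w j * es ! j ^ m)"
    by (intro tendsto_sum tendsto_mult_right w) simp
  ultimately have "mtrace (transfer_mat d (\<psi> \<circ> \<phi> ^^ m)) = (\<Sum>j<d*d. es ! j ^ m * w j)"
    using LIMSEQ_unique by (simp add: mult.commute)
  moreover have "Re (mtrace (transfer_mat d (\<psi> \<circ> \<phi> ^^ m))) \<le> real d"
  proof (rule entanglement_breaking_Re_trace_transfer_le[OF _ d])
    show "entanglement_breaking d (\<psi> \<circ> \<phi> ^^ m)"
      by (rule entanglement_breaking_comp[OF EB quantum_channel_funpow[OF QC]])
    show "(\<psi> \<circ> \<phi> ^^ m) (c \<cdot>\<^sub>m unit_mat d a b) $$ (i,j) = c * (\<psi> \<circ> \<phi> ^^ m) (unit_mat d a b) $$ (i,j)"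
      if "a < d" "b < d" "i < d" "j < d" for c a b i j
      using limit_entrywise_homogeneous[OF Lpow conv linear_map_mat_carrier[OF Lpow unit_mat_carrier] that(3,4)]
        linear_map_mat_smult[OF Lpow unit_mat_carrier] by simp
  qed
  ultimately show ?thesis by simp
qed

theorem mainTheorem15:
  fixes d :: nat and \<phi> :: "complex mat \<Rightarrow> complex mat"
  assumes "quantum_channel d \<phi>"
    and "peripheral_count d \<phi> > d"
  shows "asymptotically_entanglement_saving d \<phi>"
  unfolding asymptotically_entanglement_saving_def
proof (intro allI impI notI)
  fix \<psi> assume "limit_point_maps d (\<lambda>n. \<phi> ^^ n) \<psi>" and EB: "entanglement_breaking d \<psi>"
  then obtain r where r: "strict_mono r" and conv: "\<And>X i j. X \<in> carrier_mat d d \<Longrightarrow> i < d \<Longrightarrow> j < d \<Longrightarrow>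
      (\<lambda>n. (\<phi> ^^ r n) X $$ (i,j)) \<longlonglongrightarrow> \<psi> X $$ (i,j)"
    unfolding limit_point_maps_def by blast
  obtain es where es: "char_poly (transfer_mat d \<phi>) = (\<Prod>e\<leftarrow>es. [:- e, 1:])" and "length es = d*d"
    using char_poly_factorized[OF transfer_mat_carrier] by blast
  note count = peripheral_count_eq_card[OF es \<open>length es = d*d\<close>]
  have "d > 0" using assms(2) unfolding count by (cases d) auto
  define w where "w j = lim (\<lambda>n. es ! j ^ r n)" for j
  have w: "(\<lambda>n. es ! j ^ r n) \<longlonglongrightarrow> w j" if "j < d*d" for j
    using convergent_eigenvalue_powers_transfer_mat[OF _ conv es that] assms(1)
    unfolding w_def convergent_LIMSEQ_iff quantum_channel_def by blast
  have "real (card {j. j < d*d \<and> cmod (es ! j) = 1}) \<le> real d"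
    by (intro card_unimodular_le_if_Re_power_sums_bounded[where w = w, OF r] w
        Re_sum_eigenvalue_limits_le[OF assms(1) \<open>d > 0\<close> conv EB es w])
  with assms(2) show False unfolding count by simp
qed

end
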